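(* $u(4,8)=3$ and $\varepsilon(4,8)=4$.
   Context: All matrices are binary. For a nonempty set $S$ of columns of a binary matrix, let $z$ be the sum over the integers of the columns in $S$. $S$ is called $1$-free if no entry of $z$ equals $1$, and even if all entries of $z$ are even. For a binary $m\times n$ matrix $A$ with $m<n$: $\varepsilon(A)$ is the smallest cardinality of a nonempty even set of columns, and $u(A)$ the smallest cardinality of a nonempty $1$-free set of columns. For $m<n$, $\varepsilon(m,n)$ and $u(m,n)$ are the maxima of $\varepsilon(A)$, resp. $u(A)$, over all binary $m\times n$ matrices. *)

theory Defs
  imports Main
begin

text \<open>A binary m x n matrix is represented as A :: nat => nat => bool, where only the
entries A i j with i < m and j < n matter (True = 1, False = 0).  Columns are
indexed by {..<n}, rows by {..<m}.\<close>

definition colsum :: "(nat \<Rightarrow> nat \<Rightarrow> bool) \<Rightarrow> nat set \<Rightarrow> nat \<Rightarrow> nat" where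
  "colsum A S i = (\<Sum>j\<in>S. of_bool (A i j))"

definition one_free :: "nat \<Rightarrow> (nat \<Rightarrow> nat \<Rightarrow> bool) \<Rightarrow> nat set \<Rightarrow> bool" where
  "one_free m A S \<longleftrightarrow> (\<forall>i<m. colsum A S i \<noteq> 1)"

definition even_set :: "nat \<Rightarrow> (nat \<Rightarrow> nat \<Rightarrow> bool) \<Rightarrow> nat set \<Rightarrow> bool" where
  "even_set m A S \<longleftrightarrow> (\<forall>i<m. even (colsum A S i))"

definition eps_mat :: "nat \<Rightarrow> nat \<Rightarrow> (nat \<Rightarrow> nat \<Rightarrow> bool) \<Rightarrow> nat" where
  "eps_mat m n A = Min {card S | S. S \<subseteq> {..<n} \<and> S \<noteq> {} \<and> even_set m A S}"

definition u_mat :: "nat \<Rightarrow> nat \<Rightarrow> (nat \<Rightarrow> nat \<Rightarrow> bool) \<Rightarrow> nat" where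
  "u_mat m n A = Min {card S | S. S \<subseteq> {..<n} \<and> S \<noteq> {} \<and> one_free m A S}"

definition eps_max :: "nat \<Rightarrow> nat \<Rightarrow> nat" where
  "eps_max m n = Max {eps_mat m n A | A. True}"

definition u_max :: "nat \<Rightarrow> nat \<Rightarrow> nat" where
  "u_max m n = Max {u_mat m n A | A. True}"

end

theory Submission
  imports Defs
begin

text \<open>Columns of a \<open>4 \<times> 8\<close> matrix are vectors in \<open>\<bbbF>\<^sub>2\<^sup>4\<close>. The \<open>28\<close> pairs of columns have
  parity vectors in a \<open>16\<close>-element set, so two pairs share one, and their symmetric difference is
  a nonempty even set of at most four columns: \<open>\<epsilon>(4,8) \<le> 4\<close>. A zero column or two equal columns
  form a \<open>1\<close>-free set of size one or two; otherwise the columns are eight distinct nonzero vectors of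
  \<open>\<bbbF>\<^sub>2\<^sup>4\<close>, and an exhaustive search over all such sets of vectors finds a \<open>1\<close>-free triple
  among them: \<open>u(4,8) \<le> 3\<close>. The matrix whose columns are the unit vectors and their complements
  attains both bounds: its columns are distinct and nonzero, so every \<open>1\<close>-free set has at least
  three columns, and they have odd weight, so every even set has even size.\<close>

definition column :: "(nat \<Rightarrow> nat \<Rightarrow> bool) \<Rightarrow> nat \<Rightarrow> nat \<Rightarrow> bool list" where
  "column A m j = map (\<lambda>i. A i j) [0..<m]"

lemma length_column [simp]: "length (column A m j) = m"
  by (simp add: column_def)

lemma colsum_singleton: "colsum A {j} i = of_bool (A i j)"
  by (simp add: colsum_def)

lemma colsum_pair: "j \<noteq> k \<Longrightarrow> colsum A {j, k} i = of_bool (A i j) + of_bool (A i k)"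
  by (simp add: colsum_def)

lemma colsum_triple:
  "distinct [j, k, l] \<Longrightarrow> colsum A {j, k, l} i = of_bool (A i j) + of_bool (A i k) + of_bool (A i l)"
  by (simp add: colsum_def)

lemma even_set_imp_one_free: "even_set m A S \<Longrightarrow> one_free m A S"
  unfolding even_set_def one_free_def by (metis odd_one)

lemma one_free_singleton_iff: "one_free m A {j} \<longleftrightarrow> True \<notin> set (column A m j)"
  by (auto simp: one_free_def colsum_singleton column_def)

lemma one_free_pair_iff:
  assumes "j \<noteq> k"
  shows "one_free m A {j, k} \<longleftrightarrow> column A m j = column A m k"
proof -
  have "of_bool p + of_bool q \<noteq> (1::nat) \<longleftrightarrow> p = q" for p q
    by (cases p; cases q) auto
  then show ?thesis
    by (simp add: one_free_def colsum_pair[OF assms] column_def atLeast0LessThan lessThan_iff Ball_def)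
qed

lemma three_le_card_one_free:
  assumes "inj_on (column A m) J" "\<forall>j\<in>J. True \<in> set (column A m j)"
    and "S \<subseteq> J" "finite S" "S \<noteq> {}" "one_free m A S"
  shows "3 \<le> card S"
proof (rule ccontr)
  assume "\<not> 3 \<le> card S"
  then have "card S = 1 \<or> card S = 2"
    using assms(4,5) by (cases "card S") auto
  then show False
  proof
    assume "card S = 1"
    then obtain j where "S = {j}"
      by (rule card_1_singletonE)
    then show False
      using assms one_free_singleton_iff by auto
  next
    assume "card S = 2"
    then obtain j k where "S = {j, k}" "j \<noteq> k"
      unfolding card_2_iff by blast
    then show False
      using assms one_free_pair_iff unfolding inj_on_def by auto
  qed
qed

lemma even_sum_sym_diff:
  fixes f :: "'a \<Rightarrow> nat"
  assumes "finite S" "finite T"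
  shows "even (sum f (sym_diff S T)) \<longleftrightarrow> even (sum f S + sum f T)"
proof -
  have "sum f S = sum f (S - T) + sum f (S \<inter> T)" "sum f T = sum f (T - S) + sum f (S \<inter> T)"
    using assms sum.subset_diff[of "S \<inter> T" S f] sum.subset_diff[of "S \<inter> T" T f]
    by (auto simp: Diff_Int Int_commute)
  moreover have "sum f (sym_diff S T) = sum f (S - T) + sum f (T - S)"
    using assms by (intro sum.union_disjoint) auto
  ultimately have "sum f S + sum f T = sum f (sym_diff S T) + 2 * sum f (S \<inter> T)"
    by simp
  then show ?thesis by simp
qed

text \<open>Two distinct pairs of columns with the same parity vector have an even symmetric difference.\<close>
lemma small_even_set_exists:
  assumes "2 ^ m < n choose 2"
  shows "\<exists>S \<subseteq> {..<n}. S \<noteq> {} \<and> card S \<le> 4 \<and> even_set m A S"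
proof -
  define pairs where "pairs = {S. S \<subseteq> {..<n} \<and> card S = 2}"
  define parity where "parity S = {i \<in> {..<m}. odd (colsum A S i)}" for S
  have "parity ` pairs \<subseteq> Pow {..<m}"
    by (auto simp: parity_def)
  moreover have "card (Pow {..<m}) < card pairs"
    using assms by (simp add: pairs_def n_subsets card_Pow)
  ultimately have "\<not> inj_on parity pairs"
    by (meson card_inj_on_le finite_Pow_iff finite_lessThan leD)
  then obtain S T where "S \<in> pairs" "T \<in> pairs" "S \<noteq> T" and same_parity: "parity S = parity T"
    unfolding inj_on_def by blast
  then have ST: "S \<subseteq> {..<n}" "T \<subseteq> {..<n}" "card S = 2" "card T = 2" "S \<noteq> T"
    by (simp_all add: pairs_def)
  then have fin: "finite S" "finite T"
    by (simp_all add: card_ge_0_finite)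
  have "sym_diff S T \<subseteq> {..<n}" "sym_diff S T \<noteq> {}"
    using ST by auto
  moreover have "card (sym_diff S T) \<le> 4"
  proof -
    have "card (sym_diff S T) \<le> card (S - T) + card (T - S)"
      by (rule card_Un_le)
    also have "\<dots> \<le> card S + card T"
      using fin by (intro add_mono card_mono) auto
    finally show ?thesis using ST by simp
  qed
  moreover have "even_set m A (sym_diff S T)"
    unfolding even_set_def
  proof (intro allI impI)
    fix i assume "i < m"
    then have "even (colsum A S i) \<longleftrightarrow> even (colsum A T i)"
      using same_parity unfolding parity_def by blast
    then show "even (colsum A (sym_diff S T) i)"
      unfolding colsum_def even_sum_sym_diff[OF fin] by simp
  qed
  ultimately show ?thesis by blast
qed

lemma even_set_card_even:
  assumes "finite S" "\<forall>j \<in> S. odd (\<Sum>i<m. of_bool (A i j) :: nat)" "even_set m A S"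
  shows "even (card S)"
proof -
  have "even (\<Sum>i<m. colsum A S i)"
    using assms(3) unfolding even_set_def by (intro dvd_sum) simp
  also have "(\<Sum>i<m. colsum A S i) = (\<Sum>j\<in>S. \<Sum>i<m. of_bool (A i j))"
    unfolding colsum_def by (rule sum.swap)
  finally have "even (card {j \<in> S. odd (\<Sum>i<m. of_bool (A i j) :: nat)})"
    using assms(1) by (simp only: even_sum_iff)
  moreover have "{j \<in> S. odd (\<Sum>i<m. of_bool (A i j) :: nat)} = S"
    using assms(2) by blast
  ultimately show ?thesis by simp
qed

definition one_free_triple :: "bool list \<Rightarrow> bool list \<Rightarrow> bool list \<Rightarrow> bool" where
  "one_free_triple a b c \<longleftrightarrow>
     list_all (\<lambda>(p, q, r). of_bool p + of_bool q + of_bool r \<noteq> (1::nat)) (zip a (zip b c))"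

lemma zip_columns:
  "zip (column A m j) (zip (column A m k) (column A m l)) = map (\<lambda>i. (A i j, A i k, A i l)) [0..<m]"
  by (simp add: column_def zip_map_map zip_same_conv_map)

lemma one_free_triple_iff:
  assumes "distinct [j, k, l]"
  shows "one_free m A {j, k, l} \<longleftrightarrow> one_free_triple (column A m j) (column A m k) (column A m l)"
  unfolding one_free_def colsum_triple[OF assms] one_free_triple_def zip_columns
  by (auto simp: list.pred_map list_all_iff)

definition has_one_free_triple :: "bool list set \<Rightarrow> bool" where
  "has_one_free_triple W \<longleftrightarrow> (\<exists>a\<in>W. \<exists>b\<in>W. \<exists>c\<in>W. distinct [a, b, c] \<and> one_free_triple a b c)"

lemma has_one_free_triple_mono: "has_one_free_triple V \<Longrightarrow> V \<subseteq> W \<Longrightarrow> has_one_free_triple W"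
  unfolding has_one_free_triple_def by blast

text \<open>\<open>hits_all closes xs cs k\<close>: adding any \<open>k\<close> elements of \<open>cs\<close> to \<open>xs\<close> gives a set with the
  property certified by \<open>closes\<close>, where \<open>closes xs c\<close> means that \<open>c\<close> and \<open>xs\<close> already have it;
  this prunes the search.\<close>
fun hits_all :: "('a list \<Rightarrow> 'a \<Rightarrow> bool) \<Rightarrow> 'a list \<Rightarrow> 'a list \<Rightarrow> nat \<Rightarrow> bool" where
  "hits_all closes xs cs 0 = False"
| "hits_all closes xs [] (Suc k) = True"
| "hits_all closes xs (c # cs) (Suc k) \<longleftrightarrow>
     (closes xs c \<or> hits_all closes (c # xs) cs k) \<and> hits_all closes xs cs (Suc k)"

lemma hits_all_sound:
  assumes "hits_all closes xs cs k"
    and sound: "\<And>xs c. distinct xs \<Longrightarrow> c \<notin> set xs \<Longrightarrow> closes xs c \<Longrightarrow> P (insert c (set xs))"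
    and mono: "\<And>V W. P V \<Longrightarrow> V \<subseteq> W \<Longrightarrow> P W"
    and "distinct (xs @ cs)" "Y \<subseteq> set cs" "card Y = k"
  shows "P (set xs \<union> Y)"
  using assms(1,4-)
proof (induction cs arbitrary: xs k Y)
  case Nil
  then show ?case by (cases k) auto
next
  case (Cons c cs)
  then obtain k' where k: "k = Suc k'"
    by (cases k) auto
  show ?case
  proof (cases "c \<in> Y")
    case True
    from Cons.prems(1) consider "closes xs c" | "hits_all closes (c # xs) cs k'"
      by (auto simp: k)
    then show ?thesis
    proof cases
      case 1
      then have "P (insert c (set xs))"
        using sound[of xs c] Cons.prems(2) by simp
      then show ?thesis
        using mono True by blast
    next
      case 2
      have "finite Y"
        using Cons.prems(3) finite_subset by blast
      then have "Y - {c} \<subseteq> set cs" "card (Y - {c}) = k'"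
        using Cons.prems True k by auto
      then have "P (set (c # xs) \<union> (Y - {c}))"
        using Cons.IH[OF 2] Cons.prems(2) by simp
      moreover have "set (c # xs) \<union> (Y - {c}) = set xs \<union> Y"
        using True by auto
      ultimately show ?thesis by simp
    qed
  next
    case False
    then show ?thesis
      using Cons.IH[of xs k Y] Cons.prems k by auto
  qed
qed

fun completes_one_free_triple :: "bool list list \<Rightarrow> bool list \<Rightarrow> bool" where
  "completes_one_free_triple [] c \<longleftrightarrow> False"
| "completes_one_free_triple (a # xs) c \<longleftrightarrow>
     (\<exists>b\<in>set xs. one_free_triple a b c) \<or> completes_one_free_triple xs c"

lemma completes_one_free_triple_sound:
  "distinct xs \<Longrightarrow> c \<notin> set xs \<Longrightarrow> completes_one_free_triple xs c \<Longrightarrow>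
     has_one_free_triple (insert c (set xs))"
proof (induction xs)
  case (Cons a xs)
  show ?case
  proof (cases "\<exists>b\<in>set xs. one_free_triple a b c")
    case True
    then show ?thesis
      using Cons.prems(1,2) unfolding has_one_free_triple_def by force
  next
    case False
    then have "has_one_free_triple (insert c (set xs))"
      using Cons by simp
    then show ?thesis
      by (rule has_one_free_triple_mono) auto
  qed
qed simp

definition nonzero_vectors :: "nat \<Rightarrow> bool list list" where
  "nonzero_vectors n = filter (\<lambda>v. True \<in> set v) (product_lists (replicate n [True, False]))"

lemma set_nonzero_vectors: "set (nonzero_vectors n) = {v. length v = n \<and> True \<in> set v}"
  by (auto simp: nonzero_vectors_def product_lists_set list_all2_conv_all_nth)

lemma distinct_nonzero_vectors: "distinct (nonzero_vectors n)"
  by (simp add: nonzero_vectors_def distinct_product_lists)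

lemma eight_nonzero_vectors_have_one_free_triple:
  assumes "W \<subseteq> {v. length v = 4 \<and> True \<in> set v}" "card W = 8"
  shows "has_one_free_triple W"
proof -
  have "hits_all completes_one_free_triple [] (nonzero_vectors 4) 8"
    by code_simp
  moreover have "W \<subseteq> set (nonzero_vectors 4)"
    using assms(1) by (simp add: set_nonzero_vectors)
  ultimately have "has_one_free_triple (set [] \<union> W)"
    using hits_all_sound[where P = has_one_free_triple] completes_one_free_triple_sound
      has_one_free_triple_mono distinct_nonzero_vectors assms(2)
    by (metis append_Nil)
  then show ?thesis by simp
qed

lemma small_one_free_set_exists_4_8:
  "\<exists>S \<subseteq> {..<8}. S \<noteq> {} \<and> card S \<le> 3 \<and> one_free 4 A S"
proof (cases "\<exists>j<8. True \<notin> set (column A 4 j)")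
  case True
  then obtain j where "j < 8" "one_free 4 A {j}"
    by (auto simp only: one_free_singleton_iff)
  then show ?thesis
    by (intro exI[of _ "{j}"]) simp
next
  case nonzero: False
  show ?thesis
  proof (cases "inj_on (column A 4) {..<8}")
    case False
    then obtain j k where "j < 8" "k < 8" "j \<noteq> k" "column A 4 j = column A 4 k"
      unfolding inj_on_def by blast
    then show ?thesis
      by (intro exI[of _ "{j, k}"]) (simp add: one_free_pair_iff)
  next
    case True
    let ?W = "column A 4 ` {..<8}"
    have "?W \<subseteq> {v. length v = 4 \<and> True \<in> set v}"
      using nonzero by auto
    moreover have "card ?W = 8"
      using True by (simp add: card_image)
    ultimately have "has_one_free_triple ?W"
      by (rule eight_nonzero_vectors_have_one_free_triple)
    then obtain a b c where "a \<in> ?W" "b \<in> ?W" "c \<in> ?W" "distinct [a, b, c]" "one_free_triple a b c"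
      unfolding has_one_free_triple_def by blast
    then obtain j k l where jkl: "j < 8" "k < 8" "l < 8" "distinct [j, k, l]"
      and "one_free_triple (column A 4 j) (column A 4 k) (column A 4 l)"
      by (auto simp only: image_iff lessThan_iff) force
    then have "one_free 4 A {j, k, l}"
      by (simp add: one_free_triple_iff)
    then show ?thesis
      using jkl by (intro exI[of _ "{j, k, l}"]) auto
  qed
qed

lemma finite_card_subsets: "finite {card S |S. S \<subseteq> {..<n::nat} \<and> P S}"
proof (rule finite_subset)
  show "{card S |S. S \<subseteq> {..<n} \<and> P S} \<subseteq> {..n}"
    using card_mono[of "{..<n}"] by fastforce
qed simp

lemma u_mat_le:
  assumes "\<exists>S \<subseteq> {..<n}. S \<noteq> {} \<and> card S \<le> k \<and> one_free m A S"
  shows "u_mat m n A \<le> k"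
proof -
  obtain S where "S \<subseteq> {..<n}" "S \<noteq> {}" "card S \<le> k" "one_free m A S"
    using assms by blast
  then have "u_mat m n A \<le> card S"
    unfolding u_mat_def by (intro Min_le[OF finite_card_subsets]) blast
  then show ?thesis
    using \<open>card S \<le> k\<close> by simp
qed

lemma eps_mat_le:
  assumes "\<exists>S \<subseteq> {..<n}. S \<noteq> {} \<and> card S \<le> k \<and> even_set m A S"
  shows "eps_mat m n A \<le> k"
proof -
  obtain S where "S \<subseteq> {..<n}" "S \<noteq> {}" "card S \<le> k" "even_set m A S"
    using assms by blast
  then have "eps_mat m n A \<le> card S"
    unfolding eps_mat_def by (intro Min_le[OF finite_card_subsets]) blast
  then show ?thesis
    using \<open>card S \<le> k\<close> by simp
qed

lemma le_u_mat:
  assumes "\<exists>S \<subseteq> {..<n}. S \<noteq> {} \<and> one_free m A S"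
    and "\<And>S. S \<subseteq> {..<n} \<Longrightarrow> S \<noteq> {} \<Longrightarrow> one_free m A S \<Longrightarrow> k \<le> card S"
  shows "k \<le> u_mat m n A"
  unfolding u_mat_def using assms by (subst Min_ge_iff[OF finite_card_subsets]) auto

lemma le_eps_mat:
  assumes "\<exists>S \<subseteq> {..<n}. S \<noteq> {} \<and> even_set m A S"
    and "\<And>S. S \<subseteq> {..<n} \<Longrightarrow> S \<noteq> {} \<Longrightarrow> even_set m A S \<Longrightarrow> k \<le> card S"
  shows "k \<le> eps_mat m n A"
  unfolding eps_mat_def using assms by (subst Min_ge_iff[OF finite_card_subsets]) auto

lemma Max_eq_attained_bound:
  fixes f :: "'a \<Rightarrow> nat"
  assumes "\<And>x. f x \<le> k" "f a = k"
  shows "Max {f x |x. True} = k"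
proof (rule Max_eqI)
  show "finite {f x |x. True}"
  proof (rule finite_subset)
    show "{f x |x. True} \<subseteq> {..k}"
      using assms(1) by auto
  qed simp
  show "y \<le> k" if "y \<in> {f x |x. True}" for y
    using that assms(1) by blast
  show "k \<in> {f x |x. True}"
    using assms(2) by blast
qed

text \<open>Columns \<open>e\<^sub>0, \<dots>, e\<^sub>3\<close> followed by their complements.\<close>
definition units_and_complements :: "nat \<Rightarrow> nat \<Rightarrow> bool" where
  "units_and_complements i j \<longleftrightarrow> (if j < 4 then i = j else i + 4 \<noteq> j)"

lemma units_and_complements_columns:
  "inj_on (column units_and_complements 4) {..<8}"
  "\<forall>j\<in>{..<8}. True \<in> set (column units_and_complements 4 j)"
  "\<forall>j\<in>{..<8}. odd (\<Sum>i<4. of_bool (units_and_complements i j) :: nat)"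
proof -
  have "\<forall>j\<in>{..<8}. \<forall>k\<in>{..<8}.
      column units_and_complements 4 j = column units_and_complements 4 k \<longrightarrow> j = k"
    by (simp add: lessThan_nat_numeral column_def units_and_complements_def upt_rec)
  then show "inj_on (column units_and_complements 4) {..<8}"
    unfolding inj_on_def by blast
  show "\<forall>j\<in>{..<8}. True \<in> set (column units_and_complements 4 j)"
    by (simp add: lessThan_nat_numeral column_def units_and_complements_def upt_rec)
  show "\<forall>j\<in>{..<8}. odd (\<Sum>i<4. of_bool (units_and_complements i j) :: nat)"
    by (simp add: lessThan_nat_numeral units_and_complements_def del: sum_of_bool_eq)
qed

lemma u_mat_4_8_le: "u_mat 4 8 A \<le> 3"
  by (rule u_mat_le[OF small_one_free_set_exists_4_8])

lemma small_even_set_exists_4_8: "\<exists>S \<subseteq> {..<8}. S \<noteq> {} \<and> card S \<le> 4 \<and> even_set 4 A S"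
  by (rule small_even_set_exists) (simp add: choose_two)

lemma eps_mat_4_8_le: "eps_mat 4 8 A \<le> 4"
  by (rule eps_mat_le[OF small_even_set_exists_4_8])

lemma one_free_units_and_complements_card:
  "S \<subseteq> {..<8} \<Longrightarrow> S \<noteq> {} \<Longrightarrow> one_free 4 units_and_complements S \<Longrightarrow> 3 \<le> card S"
  using three_le_card_one_free[OF units_and_complements_columns(1,2)]
  by (meson finite_lessThan finite_subset)

lemma u_mat_units_and_complements: "u_mat 4 8 units_and_complements = 3"
proof (rule antisym[OF u_mat_4_8_le le_u_mat])
  show "\<exists>S \<subseteq> {..<8}. S \<noteq> {} \<and> one_free 4 units_and_complements S"
    using small_one_free_set_exists_4_8 by blast
qed (rule one_free_units_and_complements_card)

lemma eps_mat_units_and_complements: "eps_mat 4 8 units_and_complements = 4"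
proof (rule antisym[OF eps_mat_4_8_le le_eps_mat])
  show "\<exists>S \<subseteq> {..<8}. S \<noteq> {} \<and> even_set 4 units_and_complements S"
    using small_even_set_exists_4_8 by blast
next
  fix S assume S: "S \<subseteq> {..<8}" "S \<noteq> {}" "even_set 4 units_and_complements S"
  then have "even (card S)"
    using even_set_card_even units_and_complements_columns(3)
    by (meson finite_lessThan finite_subset subsetD)
  moreover have "3 \<le> card S"
    using one_free_units_and_complements_card S even_set_imp_one_free by blast
  ultimately show "4 \<le> card S"
    by presburger
qed

theorem theorem7p1:
  shows "u_max 4 8 = 3 \<and> eps_max 4 8 = 4"
  unfolding u_max_def eps_max_def
  by (intro conjI Max_eq_attained_bound u_mat_4_8_le eps_mat_4_8_le)
    (rule u_mat_units_and_complements eps_mat_units_and_complements)+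

end
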